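(* For every set of formulas $\Gamma\cup\{\varphi\}\subseteq For$: $\Gamma \vdash_{\bf Dm} \varphi$ if and only if there exists a set of formulas $\Upsilon$ such that $\Gamma\cup\{\circ \delta \ : \ \delta \in \Upsilon\} \vdash_{\bf Km} \varphi$, where $\circ\delta:=\Box\delta\to\Diamond\delta$.
   Context: Formulas are built from a denumerable set of propositional variables by the unary connectives $\neg$, $\Box$ and the binary connective $\to$; $For$ is the set of all formulas. Abbreviations: $\Diamond\alpha:=\neg\Box\neg\alpha$, $\alpha\vee\beta:=\neg\alpha\to\beta$, $\alpha\wedge\beta:=\neg(\alpha\to\neg\beta)$. All Hilbert calculi below have as axioms all instances (over $For$) of the axiom schemas of a standard Hilbert calculus for classical propositional logic in the signature $\{\neg,\to\}$, plus the listed modal schemas, with modus ponens as the only rule; $\Gamma\vdash_{\bf L}\alpha$ means there is a derivation of $\alpha$ from $\Gamma$ in ${\bf L}$. ${\bf Km}$: (K') $\Diamond\alpha\to(\Box(\alpha\to\beta)\to(\Box\alpha\to\Box\beta))$; (K1') $\Diamond\neg\beta\to(\Box(\alpha\to\beta)\to(\Diamond\alpha\to\Diamond\beta))$; (K2') $\Diamond\alpha\to(\Diamond(\alpha\to\beta)\to(\Box\alpha\to\Diamond\beta))$; (M3') $(\Diamond\alpha\vee\Diamond\neg\alpha)\to(\Diamond\beta\to\Diamond(\alpha\to\beta))$; (M4') $\Diamond\neg\beta\to(\Diamond\neg\alpha\to\Diamond(\alpha\to\beta))$; (I1) $(\Box\alpha\wedge\Box\neg\alpha)\to(\Box(\alpha\to\beta)\wedge\Box\neg(\alpha\to\beta))$;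 (I2) $(\Box\beta\wedge\Box\neg\beta)\to(\Box(\alpha\to\beta)\wedge\Box\neg(\alpha\to\beta))$; (M1) $\neg\Diamond\alpha\to\Box(\alpha\to\beta)$; (M2) $\Box\beta\to\Box(\alpha\to\beta)$; (DN1) $\Box\alpha\to\Box\neg\neg\alpha$; (DN2) $\Box\neg\neg\alpha\to\Box\alpha$. ${\bf Dm}$: (K) $\Box(\alpha\to\beta)\to(\Box\alpha\to\Box\beta)$; (K1) $\Box(\alpha\to\beta)\to(\Diamond\alpha\to\Diamond\beta)$; (K2) $\Diamond(\alpha\to\beta)\to(\Box\alpha\to\Diamond\beta)$; (M1); (M2); (M3) $\Diamond\beta\to\Diamond(\alpha\to\beta)$; (M4) $\Diamond\neg\alpha\to\Diamond(\alpha\to\beta)$; (DN1); (DN2); (D) $\Box\alpha\to\Diamond\alpha$. *)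

theory Defs
  imports Main
begin

datatype fm = Var nat | Neg fm | Box fm | Imp fm fm

definition Dia :: "fm \<Rightarrow> fm" where "Dia a = Neg (Box (Neg a))"
definition Or :: "fm \<Rightarrow> fm \<Rightarrow> fm" where "Or a b = Imp (Neg a) b"
definition And :: "fm \<Rightarrow> fm \<Rightarrow> fm" where "And a b = Neg (Imp a (Neg b))"
definition Circ :: "fm \<Rightarrow> fm" where "Circ d = Imp (Box d) (Dia d)"

text \<open>Standard Hilbert calculus for classical propositional logic in the signature
  neg, imp (Lukasiewicz / Mendelson style axioms).\<close>
inductive_set CPL_ax :: "fm set" where
  A1: "Imp a (Imp b a) \<in> CPL_ax"
| A2: "Imp (Imp a (Imp b c)) (Imp (Imp a b) (Imp a c)) \<in> CPL_ax"
| A3: "Imp (Imp (Neg b) (Neg a)) (Imp (Imp (Neg b) a) b) \<in> CPL_ax"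

inductive_set Km_ax :: "fm set" where
  Kp: "Imp (Dia a) (Imp (Box (Imp a b)) (Imp (Box a) (Box b))) \<in> Km_ax"
| K1p: "Imp (Dia (Neg b)) (Imp (Box (Imp a b)) (Imp (Dia a) (Dia b))) \<in> Km_ax"
| K2p: "Imp (Dia a) (Imp (Dia (Imp a b)) (Imp (Box a) (Dia b))) \<in> Km_ax"
| M3p: "Imp (Or (Dia a) (Dia (Neg a))) (Imp (Dia b) (Dia (Imp a b))) \<in> Km_ax"
| M4p: "Imp (Dia (Neg b)) (Imp (Dia (Neg a)) (Dia (Imp a b))) \<in> Km_ax"
| I1: "Imp (And (Box a) (Box (Neg a))) (And (Box (Imp a b)) (Box (Neg (Imp a b)))) \<in> Km_ax"
| I2: "Imp (And (Box b) (Box (Neg b))) (And (Box (Imp a b)) (Box (Neg (Imp a b)))) \<in> Km_ax"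
| M1: "Imp (Neg (Dia a)) (Box (Imp a b)) \<in> Km_ax"
| M2: "Imp (Box b) (Box (Imp a b)) \<in> Km_ax"
| DN1: "Imp (Box a) (Box (Neg (Neg a))) \<in> Km_ax"
| DN2: "Imp (Box (Neg (Neg a))) (Box a) \<in> Km_ax"

inductive_set Dm_ax :: "fm set" where
  K: "Imp (Box (Imp a b)) (Imp (Box a) (Box b)) \<in> Dm_ax"
| K1: "Imp (Box (Imp a b)) (Imp (Dia a) (Dia b)) \<in> Dm_ax"
| K2: "Imp (Dia (Imp a b)) (Imp (Box a) (Dia b)) \<in> Dm_ax"
| M1: "Imp (Neg (Dia a)) (Box (Imp a b)) \<in> Dm_ax"
| M2: "Imp (Box b) (Box (Imp a b)) \<in> Dm_ax"
| M3: "Imp (Dia b) (Dia (Imp a b)) \<in> Dm_ax"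
| M4: "Imp (Dia (Neg a)) (Dia (Imp a b)) \<in> Dm_ax"
| DN1: "Imp (Box a) (Box (Neg (Neg a))) \<in> Dm_ax"
| DN2: "Imp (Box (Neg (Neg a))) (Box a) \<in> Dm_ax"
| D: "Imp (Box a) (Dia a) \<in> Dm_ax"

inductive derives :: "fm set \<Rightarrow> fm set \<Rightarrow> fm \<Rightarrow> bool" for Ax :: "fm set" where
  prem: "a \<in> G \<Longrightarrow> derives Ax G a"
| cpl: "a \<in> CPL_ax \<Longrightarrow> derives Ax G a"
| ax: "a \<in> Ax \<Longrightarrow> derives Ax G a"
| mp: "derives Ax G (Imp a b) \<Longrightarrow> derives Ax G a \<Longrightarrow> derives Ax G b"

abbreviation derives_Km :: "fm set \<Rightarrow> fm \<Rightarrow> bool" where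
  "derives_Km G a \<equiv> derives Km_ax G a"
abbreviation derives_Dm :: "fm set \<Rightarrow> fm \<Rightarrow> bool" where
  "derives_Dm G a \<equiv> derives Dm_ax G a"

end

theory Submission
  imports Defs
begin

text \<open>Each Km-axiom is a Dm-theorem: the primed axioms are weakenings of the unprimed ones,
  and the antecedent \<open>\<box>\<alpha> \<and> \<box>\<not>\<alpha>\<close> of I1/I2 is refuted in Dm by D and DN1. Conversely,
  in Km extended by all \<open>\<circ>\<delta>\<close>, each Dm-axiom is derivable: the side condition
  \<open>\<diamond>\<alpha>\<close> of K' and K2' follows from \<open>\<box>\<alpha>\<close> by \<open>\<circ>\<alpha>\<close>, and for K1', M3', M4'
  either the side condition holds or its negation is a box formula which \<open>\<circ>\<close> turns into
  the required diamond. As every \<open>\<circ>\<delta>\<close> is itself an instance of D, translating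
  derivations axiom by axiom gives both directions.\<close>

lemma derives_A1: "derives Ax G (Imp a (Imp b a))"
  by (rule derives.cpl, rule CPL_ax.A1)

lemma derives_A2: "derives Ax G (Imp (Imp a (Imp b c)) (Imp (Imp a b) (Imp a c)))"
  by (rule derives.cpl, rule CPL_ax.A2)

lemma derives_A3: "derives Ax G (Imp (Imp (Neg b) (Neg a)) (Imp (Imp (Neg b) a) b))"
  by (rule derives.cpl, rule CPL_ax.A3)

lemma derives_translate:
  assumes "derives Ax G a"
    and "\<And>b. b \<in> Ax \<Longrightarrow> derives Ax' H b"
    and "\<And>b. b \<in> G \<Longrightarrow> derives Ax' H b"
  shows "derives Ax' H a"
  using assms by (induction rule: derives.induct) (auto intro: derives.intros)

lemma derives_mono: "derives Ax G a \<Longrightarrow> G \<subseteq> H \<Longrightarrow> derives Ax H a"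
  by (erule derives_translate) (auto intro: derives.intros)

lemma derives_insert: "derives Ax G a \<Longrightarrow> derives Ax (insert b G) a"
  by (erule derives_mono) auto

lemma derives_assm: "derives Ax (insert a G) a"
  by (rule derives.prem) simp

lemma derives_imp_self: "derives Ax G (Imp a a)"
  by (meson derives_A1 derives_A2 derives.mp)

lemma derives_imp_weaken: "derives Ax G b \<Longrightarrow> derives Ax G (Imp a b)"
  by (meson derives_A1 derives.mp)

lemma derives_deduction: "derives Ax (insert a G) b \<Longrightarrow> derives Ax G (Imp a b)"
proof (induction "insert a G" b rule: derives.induct)
  case (prem b)
  then show ?case by (metis derives_imp_self derives_imp_weaken derives.prem insertE)
next
  case (cpl b)
  then show ?case by (meson derives_imp_weaken derives.cpl)
next
  case (ax b)
  then show ?case by (meson derives_imp_weaken derives.ax)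
next
  case (mp b c)
  then show ?case by (meson derives_A2 derives.mp)
qed

lemma derives_ex_falso: "derives Ax G (Neg a) \<Longrightarrow> derives Ax G a \<Longrightarrow> derives Ax G b"
  by (meson derives_A3 derives_imp_weaken derives.mp)

lemma derives_dneg_elim: "derives Ax G (Neg (Neg a)) \<Longrightarrow> derives Ax G a"
  by (meson derives_A3[of Ax G a "Neg a"] derives_imp_weaken derives_imp_self derives.mp)

lemma derives_contrapos:
  assumes "derives Ax G (Imp a b)"
  shows "derives Ax G (Imp (Neg b) (Neg a))"
proof -
  let ?G = "insert (Neg b) G"
  have "derives Ax (insert (Neg (Neg a)) ?G) b"
    by (meson assms derives_insert derives_assm derives_dneg_elim derives.mp)
  then have "derives Ax ?G (Imp (Neg (Neg a)) b)"
    by (rule derives_deduction)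
  moreover have "derives Ax ?G (Imp (Neg (Neg a)) (Neg b))"
    by (rule derives_imp_weaken, rule derives_assm)
  ultimately have "derives Ax ?G (Neg a)"
    by (meson derives_A3 derives.mp)
  then show ?thesis by (rule derives_deduction)
qed

lemma derives_cases:
  assumes "derives Ax G (Imp a b)" and "derives Ax G (Imp (Neg a) b)"
  shows "derives Ax G b"
  by (meson assms derives_contrapos derives_A3 derives.mp)

lemma derives_AndD1:
  assumes "derives Ax G (And a b)"
  shows "derives Ax G a"
proof -
  have "derives Ax (insert a (insert (Neg a) G)) (Neg b)"
    by (meson derives_ex_falso derives_assm derives_insert)
  then have "derives Ax (insert (Neg a) G) (Imp a (Neg b))"
    by (rule derives_deduction)
  then have "derives Ax (insert (Neg a) G) a"
    using assms unfolding And_def by (meson derives_ex_falso derives_insert)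
  then show ?thesis
    by (meson derives_deduction derives_cases derives_imp_self)
qed

lemma derives_AndD2:
  assumes "derives Ax G (And a b)"
  shows "derives Ax G b"
proof -
  have "derives Ax (insert (Neg b) G) (Imp a (Neg b))"
    by (rule derives_imp_weaken, rule derives_assm)
  then have "derives Ax (insert (Neg b) G) b"
    using assms unfolding And_def by (meson derives_ex_falso derives_insert)
  then show ?thesis
    by (meson derives_deduction derives_cases derives_imp_self)
qed

lemma derives_Box_Neg_of_not_Dia: "derives Ax G (Neg (Dia a)) \<Longrightarrow> derives Ax G (Box (Neg a))"
  unfolding Dia_def by (rule derives_dneg_elim)

lemma Km_Box_of_not_Dia_Neg: "derives_Km G (Neg (Dia (Neg a))) \<Longrightarrow> derives_Km G (Box a)"
  by (meson derives_Box_Neg_of_not_Dia derives.ax Km_ax.DN2 derives.mp)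

lemma Km_Dia_of_Box: "range Circ \<subseteq> G \<Longrightarrow> derives_Km G (Box a) \<Longrightarrow> derives_Km G (Dia a)"
  by (metis Circ_def derives.prem derives.mp range_subsetD)

lemma Km_derives_Dm_ax:
  assumes Circ: "range Circ \<subseteq> G" and "x \<in> Dm_ax"
  shows "derives_Km G x"
  using \<open>x \<in> Dm_ax\<close>
proof cases
  case (K a b)
  let ?H = "insert (Box a) (insert (Box (Imp a b)) G)"
  have "derives_Km ?H (Box b)"
    using Km_Dia_of_Box[of ?H a] Circ
    by (meson derives_assm derives_insert derives.mp derives.ax Km_ax.Kp subset_insertI2)
  then show ?thesis using K by (meson derives_deduction)
next
  case (K1 a b)
  let ?H = "insert (Neg (Dia (Neg b))) G"
  have "derives_Km ?H (Dia b)"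
    using Circ by (meson derives_assm Km_Box_of_not_Dia_Neg Km_Dia_of_Box subset_insertI2)
  then have "derives_Km G (Imp (Neg (Dia (Neg b))) x)"
    using K1 by (meson derives_imp_weaken derives_deduction)
  then show ?thesis
    using K1 by (meson derives_cases derives.ax Km_ax.K1p)
next
  case (K2 a b)
  let ?H = "insert (Box a) (insert (Dia (Imp a b)) G)"
  have "derives_Km ?H (Dia b)"
    using Km_Dia_of_Box[of ?H a] Circ
    by (meson derives_assm derives_insert derives.mp derives.ax Km_ax.K2p subset_insertI2)
  then show ?thesis using K2 by (meson derives_deduction)
next
  case (M3 b a)
  let ?H = "insert (Neg (Dia a)) G"
  have "derives_Km ?H (Dia (Neg a))"
    using Circ by (meson derives_assm derives_Box_Neg_of_not_Dia Km_Dia_of_Box subset_insertI2)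
  then have "derives_Km G (Or (Dia a) (Dia (Neg a)))"
    unfolding Or_def by (rule derives_deduction)
  then show ?thesis using M3 by (meson derives.mp derives.ax Km_ax.M3p)
next
  case (M4 a b)
  let ?H = "insert (Neg (Dia (Neg b))) G"
  have "derives_Km ?H (Box (Imp a b))"
    by (meson derives_assm Km_Box_of_not_Dia_Neg derives.mp derives.ax Km_ax.M2)
  then have "derives_Km ?H (Dia (Imp a b))"
    using Circ by (meson Km_Dia_of_Box subset_insertI2)
  then have "derives_Km G (Imp (Neg (Dia (Neg b))) x)"
    using M4 by (meson derives_imp_weaken derives_deduction)
  then show ?thesis
    using M4 by (meson derives_cases derives.ax Km_ax.M4p)
next
  case (D a)
  then show ?thesis using Circ by (metis Circ_def derives.prem range_subsetD)
qed (auto intro: derives.ax Km_ax.intros)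

lemma Dm_derives_not_Box_and_Box_Neg: "derives_Dm G (Imp (And (Box a) (Box (Neg a))) z)"
proof -
  let ?H = "insert (And (Box a) (Box (Neg a))) G"
  have "derives_Dm ?H (Box (Neg (Neg a)))"
    by (meson derives_assm derives_AndD1 derives.mp derives.ax Dm_ax.DN1)
  moreover have "derives_Dm ?H (Neg (Box (Neg (Neg a))))"
    using derives.mp[OF derives.ax[OF Dm_ax.D] derives_AndD2[OF derives_assm]]
    unfolding Dia_def .
  ultimately have "derives_Dm ?H z"
    by (meson derives_ex_falso)
  then show ?thesis by (rule derives_deduction)
qed

lemma Dm_derives_Km_ax: "x \<in> Km_ax \<Longrightarrow> derives_Dm G x"
  by (induction rule: Km_ax.induct)
    (auto intro: derives_imp_weaken derives.ax Dm_ax.intros Dm_derives_not_Box_and_Box_Neg)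

lemma Dm_derives_Circ: "derives_Dm G (Circ d)"
  unfolding Circ_def by (rule derives.ax, rule Dm_ax.D)

theorem mainTheorem3:
  fixes \<Gamma> :: "fm set" and \<phi> :: fm
  shows "derives_Dm \<Gamma> \<phi> \<longleftrightarrow> (\<exists>\<Upsilon>. derives_Km (\<Gamma> \<union> {Circ \<delta> | \<delta>. \<delta> \<in> \<Upsilon>}) \<phi>)"
proof
  assume "derives_Dm \<Gamma> \<phi>"
  then have "derives_Km (\<Gamma> \<union> {Circ \<delta> | \<delta>. \<delta> \<in> UNIV}) \<phi>"
    by (rule derives_translate) (auto intro: Km_derives_Dm_ax derives.prem)
  then show "\<exists>\<Upsilon>. derives_Km (\<Gamma> \<union> {Circ \<delta> | \<delta>. \<delta> \<in> \<Upsilon>}) \<phi>" ..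
next
  assume "\<exists>\<Upsilon>. derives_Km (\<Gamma> \<union> {Circ \<delta> | \<delta>. \<delta> \<in> \<Upsilon>}) \<phi>"
  then obtain \<Upsilon> where "derives_Km (\<Gamma> \<union> {Circ \<delta> | \<delta>. \<delta> \<in> \<Upsilon>}) \<phi>" ..
  then show "derives_Dm \<Gamma> \<phi>"
    by (rule derives_translate) (auto intro: Dm_derives_Km_ax Dm_derives_Circ derives.prem)
qed

end
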